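(* Let $F:\mathbb{R}\to\mathbb{R}$ be given by an everywhere convergent power series $F(u)=\sum_{k=0}^\infty a_k u^k$, let $\phi,\psi:\mathbb{R}\to\mathbb{R}$ be initial data, and let $(p_k)_{k\ge 0}$ be a probability distribution on $\{0,1,2,\dots\}$ with $p_0>0$, $p_k>0$ for every $k$ with $a_k\neq 0$, and $\sum_{k=1}^\infty k p_k\le 1$. Let $T>0$ and let $u:\mathbb{R}\times[0,T)\to\mathbb{R}$ be a mild solution of $u_{tt}-u_{xx}=F(u)$ on $[0,T)$ with initial data $\phi,\psi$. Fix $(x,t)\in\mathbb{R}\times(0,T)$, let $(\xi,\tau)$ be a random point uniformly distributed in $\Delta(x,t)$, and let $\kappa$ be a random variable with distribution $(p_k)$, independent of $(\xi,\tau)$. Then \[ u(x,t)=\mathsf{E}\left[\left(w(x,t)+\frac{t^2 b_0}{2}\right)\mathbf{1}_{\{\kappa=0\}}+\frac{t^2}{2}\,b_{\kappa}\,u^{\kappa}(\xi,\tau)\,\mathbf{1}_{\{\kappa\ge 1\}}\right]. \]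
   Context: For $(x,t)\in\mathbb{R}\times[0,\infty)$ let $\Delta(x,t)=\{(y,s):0\le s\le t,\ |y-x|\le t-s\}$ (a triangle of area $t^2$), and let \[ v(x,t)=\frac12\int_{x-t}^{x+t}\psi(y)\,dy+\frac12\big(\phi(x+t)+\phi(x-t)\big). \] A mild solution of $u_{tt}-u_{xx}=F(u)$ on $[0,T)$ with initial data $u(\cdot,0)=\phi$, $u_t(\cdot,0)=\psi$ is a measurable function $u:\mathbb{R}\times[0,T)\to\mathbb{R}$ such that for all $(x,t)\in\mathbb{R}\times[0,T)$, \[ u(x,t)=v(x,t)+\frac12\int_{\Delta(x,t)}F(u(y,s))\,dy\,ds. \] Define $w(x,t)=v(x,t)/p_0$, and for each $k\ge 0$ let $b_k=a_k/p_k$ if $p_k\neq 0$ and $b_k=0$ if $p_k=0$.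
   Formalization: The variable inside the expectation is assumed integrable, psi is integrable on every bounded interval, and a mild solution also has $F(u(y,s))$ Lebesgue integrable over every $\Delta(x,t)$. Apart from conventions, each condition added here is assumed in the paper as well or is needed for the statement above to hold. *)

theory Defs
  imports "HOL-Probability.Probability"
begin

definition tri :: "real \<Rightarrow> real \<Rightarrow> (real \<times> real) set" where
  "tri x t = {(y, s). 0 \<le> s \<and> s \<le> t \<and> \<bar>y - x\<bar> \<le> t - s}"

definition vfree :: "(real \<Rightarrow> real) \<Rightarrow> (real \<Rightarrow> real) \<Rightarrow> real \<Rightarrow> real \<Rightarrow> real" where
  "vfree phi psi x t =
     (1/2) * (LBINT y=x-t..x+t. psi y) + (1/2) * (phi (x + t) + phi (x - t))"

definition mild_solution ::
  "(real \<Rightarrow> real) \<Rightarrow> (real \<Rightarrow> real) \<Rightarrow> (real \<Rightarrow> real) \<Rightarrow> real \<Rightarrow> (real \<Rightarrow> real \<Rightarrow> real) \<Rightarrow> bool" where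
  "mild_solution F phi psi T u \<longleftrightarrow>
     (\<lambda>(y, s). u y s) \<in> borel_measurable (restrict_space lborel (UNIV \<times> {0..<T})) \<and>
     (\<forall>x t. 0 \<le> t \<and> t < T \<longrightarrow>
        set_integrable lborel (tri x t) (\<lambda>(y, s). F (u y s)) \<and>
        u x t = vfree phi psi x t + (1/2) * (\<integral>(y, s)\<in>tri x t. F (u y s) \<partial>lborel))"

end

theory Submission
  imports Defs
begin

text \<open>Split the expectation according to the value of \<open>\<kappa>\<close>. By independence, the event
  \<open>\<kappa> = k\<close> contributes \<open>p\<^sub>k\<close> times an expectation under the uniform law on \<open>\<Delta>(x,t)\<close>: in total
  \<open>v(x,t) + t\<^sup>2 a\<^sub>0/2\<close> for \<open>k = 0\<close> and \<open>t\<^sup>2 a\<^sub>k E[u\<^sup>k(\<xi>,\<tau>)]/2\<close> for \<open>k \<ge> 1\<close>. Integrability of the random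
  variable makes \<open>\<Sum>\<^sub>k |a\<^sub>k| E|u(\<xi>,\<tau>)|\<^sup>k\<close> finite, so the power series of \<open>F\<close> may be integrated
  termwise, giving \<open>v(x,t) + t\<^sup>2 E[F(u(\<xi>,\<tau>))]/2\<close>. As \<open>\<Delta>(x,t)\<close> has area \<open>t\<^sup>2\<close>, this is
  \<open>v(x,t) + \<integral>\<^bsub>\<Delta>(x,t)\<^esub> F(u)/2 = u(x,t)\<close>.\<close>

lemma closed_tri: "closed (tri x t)"
proof -
  have "tri x t = {z. 0 \<le> snd z \<and> snd z \<le> t \<and> \<bar>fst z - x\<bar> \<le> t - snd z}"
    by (auto simp: tri_def)
  also have "closed \<dots>"
    by (intro closed_Collect_conj closed_Collect_le continuous_intros)
  finally show ?thesis .
qed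

lemma tri_sets [measurable]: "tri x t \<in> sets borel"
  by (simp add: borel_closed closed_tri)

lemma has_integral_tent:
  assumes "0 \<le> t"
  shows "((\<lambda>y::real. t - \<bar>y - x\<bar>) has_integral t\<^sup>2) {x-t..x+t}"
proof -
  have left: "((\<lambda>y::real. t - \<bar>y - x\<bar>) has_integral t\<^sup>2 / 2) {x-t..x}"
  proof -
    have "((\<lambda>y. t - \<bar>y - x\<bar>) has_integral ((t-x)*x + x^2/2) - ((t-x)*(x-t) + (x-t)^2/2)) {x-t..x}"
    proof (rule fundamental_theorem_of_calculus)
      fix y assume "y \<in> {x-t..x}"
      then show "((\<lambda>y. (t-x)*y + y^2/2) has_vector_derivative (t - \<bar>y - x\<bar>)) (at y within {x-t..x})"
        by (auto intro!: derivative_eq_intros simp flip: has_real_derivative_iff_has_vector_derivative)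
    qed (use assms in simp)
    then show ?thesis by (simp add: power2_eq_square field_simps)
  qed
  have right: "((\<lambda>y::real. t - \<bar>y - x\<bar>) has_integral t\<^sup>2 / 2) {x..x+t}"
  proof -
    have "((\<lambda>y. t - \<bar>y - x\<bar>) has_integral ((t+x)*(x+t) - (x+t)^2/2) - ((t+x)*x - x^2/2)) {x..x+t}"
    proof (rule fundamental_theorem_of_calculus)
      fix y assume "y \<in> {x..x+t}"
      then show "((\<lambda>y. (t+x)*y - y^2/2) has_vector_derivative (t - \<bar>y - x\<bar>)) (at y within {x..x+t})"
        by (auto intro!: derivative_eq_intros simp flip: has_real_derivative_iff_has_vector_derivative)
    qed (use assms in simp)
    then show ?thesis by (simp add: power2_eq_square field_simps)
  qed
  show ?thesis
    using has_integral_combine[OF _ _ left right] assms by simp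
qed

lemma emeasure_tri:
  assumes "0 \<le> t"
  shows "emeasure lborel (tri x t) = ennreal (t\<^sup>2)"
proof -
  have "emeasure lborel (tri x t) = emeasure (lborel \<Otimes>\<^sub>M lborel) (tri x t)"
    by (simp add: lborel_prod)
  also have "\<dots> = (\<integral>\<^sup>+y. emeasure lborel (Pair y -` tri x t) \<partial>lborel)"
    by (rule lborel.emeasure_pair_measure_alt) (simp only: lborel_prod sets_lborel tri_sets)
  also have "\<dots> = (\<integral>\<^sup>+y. ennreal (t - \<bar>y - x\<bar>) * indicator {x-t..x+t} y \<partial>lborel)"
  proof (rule nn_integral_cong)
    fix y :: real
    have "Pair y -` tri x t = {0..t - \<bar>y - x\<bar>}" by (auto simp: tri_def)
    then show "emeasure lborel (Pair y -` tri x t) = ennreal (t - \<bar>y - x\<bar>) * indicator {x-t..x+t} y"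
      by (auto simp: indicator_def ennreal_neg)
  qed
  also have "\<dots> = ennreal (t\<^sup>2)"
    by (rule nn_integral_has_integral_lebesgue'[OF _ has_integral_tent[OF assms]]) auto
  finally show ?thesis .
qed

lemma integral_uniform_measure:
  fixes f :: "'a \<Rightarrow> real"
  assumes f [measurable]: "f \<in> borel_measurable M" and A [measurable]: "A \<in> sets M"
    and mA: "emeasure M A = ennreal c" and c: "0 < c"
  shows "(\<integral>z. f z \<partial>uniform_measure M A) = (\<integral>z\<in>A. f z \<partial>M) / c"
proof -
  have "uniform_measure M A = density M (\<lambda>z. ennreal (indicator A z / c))"
    unfolding uniform_measure_def mA using c
    by (intro density_cong) (auto simp: indicator_def divide_ennreal[of 1 c, symmetric])
  then have "(\<integral>z. f z \<partial>uniform_measure M A) = (\<integral>z. (indicator A z / c) *\<^sub>R f z \<partial>M)"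
    using c by (simp add: integral_density)
  also have "\<dots> = (\<integral>z\<in>A. f z \<partial>M) / c"
    by (simp add: set_lebesgue_integral_def)
  finally show ?thesis .
qed

lemma AE_mem_if_distr_uniform_measure:
  assumes X: "X \<in> M \<rightarrow>\<^sub>M N" and distr: "distr M N X = uniform_measure N A"
    and "emeasure N A \<noteq> 0" and "emeasure N A < \<infinity>"
  shows "AE \<omega> in M. X \<omega> \<in> A"
proof -
  have A [measurable]: "A \<in> sets N"
    using \<open>emeasure N A \<noteq> 0\<close> emeasure_notin_sets by blast
  have "AE z in distr M N X. z \<in> A"
    unfolding distr using assms by (subst AE_uniform_measure) auto
  then show ?thesis
    using X by (subst (asm) AE_distr_iff) auto
qed

lemma borel_measurable_indicator_restrict_space:
  fixes f :: "'a \<Rightarrow> real"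
  assumes f: "f \<in> borel_measurable (restrict_space M \<Omega>)" and \<Omega>: "\<Omega> \<in> sets M"
    and A [measurable]: "A \<in> sets M" and "A \<subseteq> \<Omega>"
  shows "(\<lambda>z. indicator A z * f z) \<in> borel_measurable M"
proof -
  have "(\<lambda>z. indicator \<Omega> z * f z) \<in> borel_measurable M"
    using f \<Omega> by (subst (asm) borel_measurable_restrict_space_iff) auto
  then have "(\<lambda>z. indicator A z * (indicator \<Omega> z * f z)) \<in> borel_measurable M"
    by measurable
  moreover have "indicator A z * (indicator \<Omega> z * f z) = indicator A z * f z" for z
    using \<open>A \<subseteq> \<Omega>\<close> by (auto simp: indicator_def)
  ultimately show ?thesis by simp
qed

lemma borel_measurable_power_series:
  fixes a :: "nat \<Rightarrow> real" and F :: "real \<Rightarrow> real"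
  assumes "\<And>z. (\<lambda>k. a k * z ^ k) sums F z"
  shows "F \<in> borel_measurable borel"
proof -
  have "F = (\<lambda>z. \<Sum>k. a k * z ^ k)"
    using sums_unique[OF assms] by auto
  then show ?thesis by simp
qed

lemma distr_density_indicator_indep:
  assumes "finite_measure M" and X [measurable]: "X \<in> M \<rightarrow>\<^sub>M N" and E [measurable]: "E \<in> sets M"
    and indep: "\<And>A. A \<in> sets N \<Longrightarrow>
      measure M ({\<omega> \<in> space M. X \<omega> \<in> A} \<inter> E) = measure M E * measure M {\<omega> \<in> space M. X \<omega> \<in> A}"
  shows "distr (density M (indicator E)) N X = density (distr M N X) (\<lambda>_. ennreal (measure M E))"
proof (rule measure_eqI)
  interpret finite_measure M by fact
  fix A assume "A \<in> sets (distr (density M (indicator E)) N X)"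
  then have A [measurable]: "A \<in> sets N" by simp
  have "emeasure (distr (density M (indicator E)) N X) A = (\<integral>\<^sup>+\<omega>. indicator E \<omega> * indicator (X -` A \<inter> space M) \<omega> \<partial>M)"
    by (simp add: emeasure_distr emeasure_density)
  also have "\<dots> = (\<integral>\<^sup>+\<omega>. indicator ({\<omega> \<in> space M. X \<omega> \<in> A} \<inter> E) \<omega> \<partial>M)"
    by (intro nn_integral_cong) (auto simp: indicator_def)
  also have "\<dots> = emeasure M ({\<omega> \<in> space M. X \<omega> \<in> A} \<inter> E)"
    by (simp add: nn_integral_indicator)
  also have "\<dots> = ennreal (measure M E) * emeasure (distr M N X) A"
    using indep[OF A]
    by (simp add: emeasure_eq_measure emeasure_distr ennreal_mult vimage_def Int_def conj_commute)
  also have "\<dots> = emeasure (density (distr M N X) (\<lambda>_. ennreal (measure M E))) A"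
    by (simp add: emeasure_density_const)
  finally show "emeasure (distr (density M (indicator E)) N X) A =
      emeasure (density (distr M N X) (\<lambda>_. ennreal (measure M E))) A" .
qed simp

context
  fixes M :: "'w measure" and N :: "'a measure" and X :: "'w \<Rightarrow> 'a" and E :: "'w set"
  assumes fin: "finite_measure M" and X [measurable]: "X \<in> M \<rightarrow>\<^sub>M N" and E [measurable]: "E \<in> sets M"
    and indep: "\<And>A. A \<in> sets N \<Longrightarrow>
      measure M ({\<omega> \<in> space M. X \<omega> \<in> A} \<inter> E) = measure M E * measure M {\<omega> \<in> space M. X \<omega> \<in> A}"
begin

lemma integral_indicator_indep:
  fixes f :: "'a \<Rightarrow> real"
  assumes f [measurable]: "f \<in> borel_measurable N"
  shows "(\<integral>\<omega>. indicator E \<omega> * f (X \<omega>) \<partial>M) = measure M E * (\<integral>z. f z \<partial>distr M N X)"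
proof -
  have "(\<integral>\<omega>. indicator E \<omega> * f (X \<omega>) \<partial>M) = (\<integral>\<omega>. f (X \<omega>) \<partial>density M (indicator E))"
    unfolding ennreal_indicator[symmetric] by (subst integral_density) auto
  also have "\<dots> = (\<integral>z. f z \<partial>distr (density M (indicator E)) N X)"
    by (simp add: integral_distr)
  also have "\<dots> = measure M E * (\<integral>z. f z \<partial>distr M N X)"
    by (simp add: distr_density_indicator_indep[OF fin X E indep] integral_density)
  finally show ?thesis .
qed

lemma nn_integral_indicator_indep:
  assumes f [measurable]: "f \<in> borel_measurable N"
  shows "(\<integral>\<^sup>+\<omega>. indicator E \<omega> * f (X \<omega>) \<partial>M) = ennreal (measure M E) * (\<integral>\<^sup>+z. f z \<partial>distr M N X)"
proof -
  have "(\<integral>\<^sup>+\<omega>. indicator E \<omega> * f (X \<omega>) \<partial>M) = (\<integral>\<^sup>+\<omega>. f (X \<omega>) \<partial>density M (indicator E))"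
    by (simp add: nn_integral_density)
  also have "\<dots> = (\<integral>\<^sup>+z. f z \<partial>distr (density M (indicator E)) N X)"
    by (simp add: nn_integral_distr)
  also have "\<dots> = ennreal (measure M E) * (\<integral>\<^sup>+z. f z \<partial>distr M N X)"
    by (simp add: distr_density_indicator_indep[OF fin X E indep] nn_integral_density nn_integral_cmult)
  finally show ?thesis .
qed

end


lemma sums_integral_discrete_partition:
  fixes G :: "'w \<Rightarrow> real" and K :: "'w \<Rightarrow> nat"
  assumes G: "integrable M G" and K [measurable]: "K \<in> M \<rightarrow>\<^sub>M count_space UNIV"
  shows "(\<lambda>k. \<integral>\<omega>. indicator {\<omega> \<in> space M. K \<omega> = k} \<omega> * G \<omega> \<partial>M) sums integral\<^sup>L M G"
    and "summable (\<lambda>k. \<integral>\<omega>. indicator {\<omega> \<in> space M. K \<omega> = k} \<omega> * \<bar>G \<omega>\<bar> \<partial>M)"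
proof -
  define fibre where "fibre k = {\<omega> \<in> space M. K \<omega> = k}" for k
  have fibre_sets [measurable]: "fibre k \<in> sets M" for k
    unfolding fibre_def by measurable
  have G_m [measurable]: "G \<in> borel_measurable M"
    using G by (rule borel_measurable_integrable)
  have piece_int: "integrable M (\<lambda>\<omega>. indicator (fibre k) \<omega> * g \<omega>)" if "integrable M g" for g :: "'w \<Rightarrow> real" and k
    using integrable_real_mult_indicator[OF fibre_sets that] by (simp add: mult.commute)
  have fibre_sums: "(\<lambda>k. indicator (fibre k) \<omega> * y) sums y" if "\<omega> \<in> space M" for \<omega> and y :: real
  proof -
    have "(\<lambda>k. indicator (fibre k) \<omega> * y) = (\<lambda>k. if k = K \<omega> then y else 0)"
      using that by (auto simp: fibre_def fun_eq_iff)
    then show ?thesis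
      using sums_single[of "K \<omega>" "\<lambda>_. y"] by simp
  qed
  have piece_nn: "ennreal (\<integral>\<omega>. indicator (fibre k) \<omega> * \<bar>G \<omega>\<bar> \<partial>M)
      = (\<integral>\<^sup>+\<omega>. ennreal \<bar>G \<omega>\<bar> * indicator (fibre k) \<omega> \<partial>M)" for k
  proof -
    have "ennreal (\<integral>\<omega>. indicator (fibre k) \<omega> * \<bar>G \<omega>\<bar> \<partial>M)
        = (\<integral>\<^sup>+\<omega>. ennreal (indicator (fibre k) \<omega> * \<bar>G \<omega>\<bar>) \<partial>M)"
      using piece_int[OF integrable_abs[OF G]] by (intro nn_integral_eq_integral[symmetric]) auto
    also have "\<dots> = (\<integral>\<^sup>+\<omega>. ennreal \<bar>G \<omega>\<bar> * indicator (fibre k) \<omega> \<partial>M)"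
      by (intro nn_integral_cong) (auto simp: indicator_def)
    finally show ?thesis .
  qed
  have "(\<Sum>k. ennreal (\<integral>\<omega>. indicator (fibre k) \<omega> * \<bar>G \<omega>\<bar> \<partial>M))
      = (\<Sum>k. \<integral>\<^sup>+\<omega>. ennreal \<bar>G \<omega>\<bar> * indicator (fibre k) \<omega> \<partial>M)"
    by (simp only: piece_nn)
  also have "\<dots> = (\<integral>\<^sup>+\<omega>\<in>(\<Union>k. fibre k). ennreal \<bar>G \<omega>\<bar> \<partial>M)"
    by (rule nn_integral_disjoint_family[symmetric]) (auto simp: disjoint_family_on_def fibre_def)
  also have "\<dots> = (\<integral>\<^sup>+\<omega>. ennreal \<bar>G \<omega>\<bar> \<partial>M)"
    by (intro nn_integral_cong) (auto simp: fibre_def indicator_def)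
  also have "\<dots> < \<infinity>"
    using G by (simp add: integrable_iff_bounded)
  finally have abs_summable: "summable (\<lambda>k. \<integral>\<omega>. indicator (fibre k) \<omega> * \<bar>G \<omega>\<bar> \<partial>M)"
    by (intro summable_suminf_not_top) auto
  then show "summable (\<lambda>k. \<integral>\<omega>. indicator {\<omega> \<in> space M. K \<omega> = k} \<omega> * \<bar>G \<omega>\<bar> \<partial>M)"
    by (simp add: fibre_def)
  have "(\<lambda>k. \<integral>\<omega>. indicator (fibre k) \<omega> * G \<omega> \<partial>M) sums (\<integral>\<omega>. (\<Sum>k. indicator (fibre k) \<omega> * G \<omega>) \<partial>M)"
    using fibre_sums[THEN sums_summable] abs_summable
    by (intro sums_integral piece_int G AE_I2) (auto simp: abs_mult)
  also have "(\<integral>\<omega>. (\<Sum>k. indicator (fibre k) \<omega> * G \<omega>) \<partial>M) = integral\<^sup>L M G"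
    using fibre_sums[THEN sums_unique] by (intro Bochner_Integration.integral_cong) auto
  finally show "(\<lambda>k. \<integral>\<omega>. indicator {\<omega> \<in> space M. K \<omega> = k} \<omega> * G \<omega> \<partial>M) sums integral\<^sup>L M G"
    by (simp add: fibre_def)
qed

lemma sums_integral_indep_index:
  fixes X :: "'w \<Rightarrow> 'a" and K :: "'w \<Rightarrow> nat" and g :: "nat \<Rightarrow> 'a \<Rightarrow> real"
  assumes "prob_space M"
    and X [measurable]: "X \<in> M \<rightarrow>\<^sub>M N" and K [measurable]: "K \<in> M \<rightarrow>\<^sub>M count_space UNIV"
    and indep: "\<And>A k. A \<in> sets N \<Longrightarrow>
      measure M {\<omega> \<in> space M. X \<omega> \<in> A \<and> K \<omega> = k} = p k * measure M {\<omega> \<in> space M. X \<omega> \<in> A}"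
    and g [measurable]: "\<And>k. g k \<in> borel_measurable N"
    and int: "integrable M (\<lambda>\<omega>. g (K \<omega>) (X \<omega>))"
  shows "(\<lambda>k. p k * integral\<^sup>L (distr M N X) (g k)) sums (\<integral>\<omega>. g (K \<omega>) (X \<omega>) \<partial>M)"
    and "summable (\<lambda>k. p k * (\<integral>z. \<bar>g k z\<bar> \<partial>distr M N X))"
    and "p k \<noteq> 0 \<Longrightarrow> integrable (distr M N X) (g k)"
proof -
  interpret prob_space M by fact
  define fibre where "fibre k = {\<omega> \<in> space M. K \<omega> = k}" for k
  have fibre_sets [measurable]: "fibre k \<in> sets M" for k
    unfolding fibre_def by measurable
  have p_fibre: "p k = measure M (fibre k)" for k
  proof -
    have "{\<omega> \<in> space M. X \<omega> \<in> space N \<and> K \<omega> = k} = fibre k"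
      using measurable_space[OF X] by (auto simp: fibre_def)
    moreover have "{\<omega> \<in> space M. X \<omega> \<in> space N} = space M"
      using measurable_space[OF X] by auto
    ultimately show ?thesis
      using indep[of "space N" k] by (simp add: prob_space)
  qed
  have fibre_indep: "measure M ({\<omega> \<in> space M. X \<omega> \<in> A} \<inter> fibre k)
      = measure M (fibre k) * measure M {\<omega> \<in> space M. X \<omega> \<in> A}" if "A \<in> sets N" for A k
  proof -
    have "{\<omega> \<in> space M. X \<omega> \<in> A} \<inter> fibre k = {\<omega> \<in> space M. X \<omega> \<in> A \<and> K \<omega> = k}"
      by (auto simp: fibre_def)
    then show ?thesis
      using indep[OF that, of k] by (simp add: p_fibre)
  qed
  note integral_fibre = integral_indicator_indep[OF finite_measure_axioms X fibre_sets fibre_indep]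
  note nn_integral_fibre = nn_integral_indicator_indep[OF finite_measure_axioms X fibre_sets fibre_indep]
  have integral_piece: "(\<integral>\<omega>. indicator (fibre k) \<omega> * f (K \<omega>) (X \<omega>) \<partial>M) = p k * (\<integral>z. f k z \<partial>distr M N X)"
    if "\<And>j. f j \<in> borel_measurable N" for f :: "nat \<Rightarrow> 'a \<Rightarrow> real" and k
  proof -
    have "(\<integral>\<omega>. indicator (fibre k) \<omega> * f (K \<omega>) (X \<omega>) \<partial>M) = (\<integral>\<omega>. indicator (fibre k) \<omega> * f k (X \<omega>) \<partial>M)"
      by (intro Bochner_Integration.integral_cong) (auto simp: fibre_def indicator_def)
    then show ?thesis
      using integral_fibre[of "f k"] that by (simp add: p_fibre)
  qed
  show "(\<lambda>k. p k * integral\<^sup>L (distr M N X) (g k)) sums (\<integral>\<omega>. g (K \<omega>) (X \<omega>) \<partial>M)"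
    using sums_integral_discrete_partition(1)[OF int K]
    by (simp add: fibre_def[symmetric] integral_piece)
  show "summable (\<lambda>k. p k * (\<integral>z. \<bar>g k z\<bar> \<partial>distr M N X))"
    using sums_integral_discrete_partition(2)[OF int K]
    by (simp add: fibre_def[symmetric] integral_piece[of "\<lambda>j z. \<bar>g j z\<bar>"])
  assume "p k \<noteq> 0"
  then have p_pos: "0 < measure M (fibre k)"
    by (simp add: p_fibre zero_less_measure_iff)
  have "ennreal (measure M (fibre k)) * (\<integral>\<^sup>+z. ennreal \<bar>g k z\<bar> \<partial>distr M N X)
      = (\<integral>\<^sup>+\<omega>. indicator (fibre k) \<omega> * ennreal \<bar>g k (X \<omega>)\<bar> \<partial>M)"
    using nn_integral_fibre[of "\<lambda>z. ennreal \<bar>g k z\<bar>"] by simp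
  also have "\<dots> = (\<integral>\<^sup>+\<omega>. indicator (fibre k) \<omega> * ennreal \<bar>g (K \<omega>) (X \<omega>)\<bar> \<partial>M)"
    by (intro nn_integral_cong) (simp add: fibre_def indicator_def)
  also have "\<dots> \<le> (\<integral>\<^sup>+\<omega>. ennreal \<bar>g (K \<omega>) (X \<omega>)\<bar> \<partial>M)"
    by (intro nn_integral_mono) (simp add: indicator_def)
  also have "\<dots> < \<infinity>"
    using int by (simp add: integrable_iff_bounded)
  finally show "integrable (distr M N X) (g k)"
    using p_pos by (intro integrableI_bounded) (auto simp: ennreal_mult_less_top)
qed

lemma sums_integral_power_series:
  fixes h :: "'a \<Rightarrow> real"
  assumes F: "\<And>z. (\<lambda>k. a k * z ^ k) sums F z"
    and int: "\<And>k. integrable U (\<lambda>z. a k * h z ^ k)"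
    and abs_summable: "summable (\<lambda>k. \<integral>z. \<bar>a k * h z ^ k\<bar> \<partial>U)"
  shows "(\<lambda>k. a k * (\<integral>z. h z ^ k \<partial>U)) sums (\<integral>z. F (h z) \<partial>U)"
proof -
  have "summable (\<lambda>k. \<bar>a k * h z ^ k\<bar>)" for z
    using powser_insidea[OF sums_summable[OF F] , of "h z" "\<bar>h z\<bar> + 1"] by simp
  then have "(\<lambda>k. \<integral>z. a k * h z ^ k \<partial>U) sums (\<integral>z. (\<Sum>k. a k * h z ^ k) \<partial>U)"
    using abs_summable by (intro sums_integral int AE_I2) auto
  then show ?thesis
    by (simp add: sums_unique[OF F, symmetric])
qed

lemma integral_branching_power_series:
  fixes X :: "'w \<Rightarrow> 'a" and K :: "'w \<Rightarrow> nat" and h :: "'a \<Rightarrow> real"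
  assumes M: "prob_space M"
    and X [measurable]: "X \<in> M \<rightarrow>\<^sub>M N" and K [measurable]: "K \<in> M \<rightarrow>\<^sub>M count_space UNIV"
    and indep: "\<And>A k. A \<in> sets N \<Longrightarrow>
      measure M {\<omega> \<in> space M. X \<omega> \<in> A \<and> K \<omega> = k} = p k * measure M {\<omega> \<in> space M. X \<omega> \<in> A}"
    and h [measurable]: "h \<in> borel_measurable N"
    and F: "\<And>z. (\<lambda>k. a k * z ^ k) sums F z"
    and p_nonneg: "\<And>k. 0 \<le> p k" and pb: "\<And>k. p k * b k = a k" and s: "s \<noteq> 0"
    and int: "integrable M (\<lambda>\<omega>. if K \<omega> = 0 then c else s * b (K \<omega>) * h (X \<omega>) ^ K \<omega>)"
  shows "(\<integral>\<omega>. (if K \<omega> = 0 then c else s * b (K \<omega>) * h (X \<omega>) ^ K \<omega>) \<partial>M)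
      = p 0 * c + s * ((\<integral>z. F (h z) \<partial>distr M N X) - a 0)"
proof -
  interpret prob_space M by fact
  define U where "U = distr M N X"
  interpret U: prob_space U
    unfolding U_def by (rule prob_space_distr) simp
  define g where "g k z = (if k = 0 then c else s * b k * h z ^ k)" for k z
  have g_m [measurable]: "g k \<in> borel_measurable N" for k
    unfolding g_def by measurable
  have int_g: "integrable M (\<lambda>\<omega>. g (K \<omega>) (X \<omega>))"
    using int by (simp add: g_def)
  note mixture = sums_integral_indep_index[of M X N K p g, OF M X K indep g_m int_g, folded U_def]
  have a_g: "a k * h z ^ k = p k / s * g k z" if "k \<noteq> 0" for k z
    using that s by (simp add: g_def flip: pb)
  have int_power: "integrable U (\<lambda>z. a k * h z ^ k)" for k
  proof (cases "k = 0 \<or> a k = 0")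
    case False
    then have "p k \<noteq> 0" by (metis pb mult_zero_left)
    then have "integrable U (\<lambda>z. p k / s * g k z)"
      using mixture(3) by simp
    then show ?thesis using False by (simp add: a_g)
  qed auto
  have "summable (\<lambda>k. p k * (\<integral>z. \<bar>g k z\<bar> \<partial>U) / \<bar>s\<bar>)"
    using mixture(2) by (rule summable_divide)
  moreover have "\<forall>\<^sub>F k in sequentially. p k * (\<integral>z. \<bar>g k z\<bar> \<partial>U) / \<bar>s\<bar> = (\<integral>z. \<bar>a k * h z ^ k\<bar> \<partial>U)"
    using p_nonneg s by (intro eventually_sequentiallyI[of 1]) (simp add: a_g abs_mult)
  ultimately have "summable (\<lambda>k. \<integral>z. \<bar>a k * h z ^ k\<bar> \<partial>U)"
    using summable_cong[of "\<lambda>k. p k * (\<integral>z. \<bar>g k z\<bar> \<partial>U) / \<bar>s\<bar>"] by simp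
  then have "(\<lambda>k. s * (a k * (\<integral>z. h z ^ k \<partial>U))) sums (s * (\<integral>z. F (h z) \<partial>U))"
    by (intro sums_mult sums_integral_power_series[OF F int_power])
  moreover have "(\<lambda>k. if k = 0 then p 0 * c - s * a 0 else 0) sums (p 0 * c - s * a 0)"
    by (rule sums_single)
  ultimately have "(\<lambda>k. s * (a k * (\<integral>z. h z ^ k \<partial>U)) + (if k = 0 then p 0 * c - s * a 0 else 0))
      sums (p 0 * c + s * ((\<integral>z. F (h z) \<partial>U) - a 0))"
    by (auto dest: sums_add simp: algebra_simps)
  moreover have "p k * integral\<^sup>L U (g k) = s * (a k * (\<integral>z. h z ^ k \<partial>U)) + (if k = 0 then p 0 * c - s * a 0 else 0)" for k
    by (cases "k = 0") (simp_all add: g_def[abs_def] U.prob_space mult.assoc flip: pb)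
  ultimately show ?thesis
    using mixture(1) sums_unique2 by (simp add: g_def U_def)
qed

text \<open>A mild solution need only be measurable on \<open>\<real> \<times> [0,T)\<close>; cutting it off outside the
  triangle gives a Borel function on the whole plane.\<close>
lemma borel_measurable_mild_solution_on_tri:
  assumes "mild_solution F phi psi T u" and "t < T"
  shows "(\<lambda>z. indicator (tri x t) z * (case z of (y, s) \<Rightarrow> u y s)) \<in> borel_measurable borel"
proof -
  have "UNIV \<times> {0..<T} \<in> sets (borel :: (real \<times> real) measure)"
    by (intro borel_Times) auto
  moreover have "tri x t \<subseteq> UNIV \<times> {0..<T}"
    using \<open>t < T\<close> by (auto simp: tri_def)
  ultimately show ?thesis
    using assms(1) unfolding mild_solution_def
    by (intro borel_measurable_indicator_restrict_space[where M = lborel, simplified]) auto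
qed

theorem lemma1:
  fixes F :: "real \<Rightarrow> real" and a p :: "nat \<Rightarrow> real"
    and phi psi :: "real \<Rightarrow> real" and T x t :: real
    and u :: "real \<Rightarrow> real \<Rightarrow> real"
    and M :: "'w measure" and xi tau :: "'w \<Rightarrow> real" and kappa :: "'w \<Rightarrow> nat"
  assumes F_series: "\<And>z. (\<lambda>k. a k * z ^ k) sums F z"
    and psi_loc: "\<And>c d. set_integrable lborel {c..d} psi"
    and p_nonneg: "\<And>k. p k \<ge> 0"
    and p_sum: "p sums 1"
    and p0_pos: "p 0 > 0"
    and p_pos: "\<And>k. a k \<noteq> 0 \<Longrightarrow> p k > 0"
    and p_mean_summable: "summable (\<lambda>k. real k * p k)"
    and p_mean: "(\<Sum>k. real k * p k) \<le> 1"
    and T_pos: "T > 0"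
    and mild: "mild_solution F phi psi T u"
    and t_pos: "0 < t" and t_lt: "t < T"
    and M_prob: "prob_space M"
    and pt_meas: "(\<lambda>\<omega>. (xi \<omega>, tau \<omega>)) \<in> borel_measurable M"
    and pt_unif: "distr M lborel (\<lambda>\<omega>. (xi \<omega>, tau \<omega>)) = uniform_measure lborel (tri x t)"
    and kappa_meas: "kappa \<in> measurable M (count_space UNIV)"
    and kappa_dist: "\<And>k. measure M {\<omega> \<in> space M. kappa \<omega> = k} = p k"
    and indep: "\<And>A K. A \<in> sets (borel :: (real \<times> real) measure) \<Longrightarrow>
        measure M {\<omega> \<in> space M. (xi \<omega>, tau \<omega>) \<in> A \<and> kappa \<omega> \<in> K}
        = measure M {\<omega> \<in> space M. (xi \<omega>, tau \<omega>) \<in> A} * measure M {\<omega> \<in> space M. kappa \<omega> \<in> K}"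
    and integ: "integrable M (\<lambda>\<omega>.
         (if kappa \<omega> = 0 then vfree phi psi x t / p 0 + t\<^sup>2 * (if p 0 \<noteq> 0 then a 0 / p 0 else 0) / 2 else 0)
       + (if kappa \<omega> \<ge> 1 then t\<^sup>2 / 2 * (if p (kappa \<omega>) \<noteq> 0 then a (kappa \<omega>) / p (kappa \<omega>) else 0)
              * (u (xi \<omega>) (tau \<omega>)) ^ (kappa \<omega>) else 0))"
  shows "u x t = (\<integral>\<omega>.
         (if kappa \<omega> = 0 then vfree phi psi x t / p 0 + t\<^sup>2 * (if p 0 \<noteq> 0 then a 0 / p 0 else 0) / 2 else 0)
       + (if kappa \<omega> \<ge> 1 then t\<^sup>2 / 2 * (if p (kappa \<omega>) \<noteq> 0 then a (kappa \<omega>) / p (kappa \<omega>) else 0)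
              * (u (xi \<omega>) (tau \<omega>)) ^ (kappa \<omega>) else 0) \<partial>M)"
proof -
  define G where "G \<omega> = (if kappa \<omega> = 0 then vfree phi psi x t / p 0 + t\<^sup>2 * (if p 0 \<noteq> 0 then a 0 / p 0 else 0) / 2 else 0)
       + (if kappa \<omega> \<ge> 1 then t\<^sup>2 / 2 * (if p (kappa \<omega>) \<noteq> 0 then a (kappa \<omega>) / p (kappa \<omega>) else 0)
              * (u (xi \<omega>) (tau \<omega>)) ^ (kappa \<omega>) else 0)" for \<omega>
  define pt where "pt = (\<lambda>\<omega>. (xi \<omega>, tau \<omega>))"
  define h where "h z = indicator (tri x t) z * (case z of (y, s) \<Rightarrow> u y s)" for z
  define b where "b k = (if p k \<noteq> 0 then a k / p k else 0)" for k
  define c where "c = vfree phi psi x t / p 0 + t\<^sup>2 * b 0 / 2"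
  define branch where "branch \<omega> = (if kappa \<omega> = 0 then c else t\<^sup>2 / 2 * b (kappa \<omega>) * h (pt \<omega>) ^ kappa \<omega>)" for \<omega>
  have pt [measurable]: "pt \<in> borel_measurable M" and U: "distr M lborel pt = uniform_measure lborel (tri x t)"
    using pt_meas pt_unif by (simp_all add: pt_def)
  have h [measurable]: "h \<in> borel_measurable borel"
    unfolding h_def[abs_def] using mild t_lt by (rule borel_measurable_mild_solution_on_tri)
  have area: "emeasure lborel (tri x t) = ennreal (t\<^sup>2)" and t2: "0 < t\<^sup>2"
    using t_pos by (simp_all add: emeasure_tri)
  have pb: "p k * b k = a k" for k
    using p_pos[of k] by (cases "a k = 0") (auto simp: b_def)
  have "AE \<omega> in M. pt \<omega> \<in> tri x t"
    using area t2 by (intro AE_mem_if_distr_uniform_measure[OF _ U]) auto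
  then have G_branch: "AE \<omega> in M. G \<omega> = branch \<omega>"
    by eventually_elim (auto simp: G_def branch_def c_def b_def h_def pt_def)
  have G_int: "integrable M G"
    unfolding G_def[abs_def] by (rule integ)
  have branch_m: "branch \<in> borel_measurable M"
    unfolding branch_def[abs_def] by (rule measurable_compose_countable[OF _ kappa_meas]) measurable
  have G_eq: "integral\<^sup>L M G = integral\<^sup>L M branch" and branch_int: "integrable M branch"
    using G_int integrable_cong_AE[OF _ branch_m G_branch] integral_cong_AE[OF _ branch_m G_branch]
    by (auto intro: borel_measurable_integrable)
  have indep_pt: "measure M {\<omega> \<in> space M. pt \<omega> \<in> A \<and> kappa \<omega> = k} = p k * measure M {\<omega> \<in> space M. pt \<omega> \<in> A}"
    if "A \<in> sets lborel" for A k
    using that indep[of A "{k}"] kappa_dist[of k] by (simp add: pt_def)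
  have "integral\<^sup>L M branch = p 0 * c + t\<^sup>2 / 2 * ((\<integral>z. F (h z) \<partial>uniform_measure lborel (tri x t)) - a 0)"
    using integral_branching_power_series[where N = lborel, OF M_prob _ kappa_meas indep_pt _ F_series p_nonneg pb _
        branch_int[unfolded branch_def]] U t2
    by (simp add: branch_def[abs_def])
  also have "(\<integral>z. F (h z) \<partial>uniform_measure lborel (tri x t)) = (\<integral>(y, s)\<in>tri x t. F (u y s) \<partial>lborel) / t\<^sup>2"
  proof -
    have "(\<integral>z\<in>tri x t. F (h z) \<partial>lborel) = (\<integral>(y, s)\<in>tri x t. F (u y s) \<partial>lborel)"
      by (intro set_lebesgue_integral_cong) (auto simp: h_def)
    then show ?thesis
      using area t2 borel_measurable_power_series[OF F_series] by (simp add: integral_uniform_measure)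
  qed
  also have "p 0 * c + t\<^sup>2 / 2 * ((\<integral>(y, s)\<in>tri x t. F (u y s) \<partial>lborel) / t\<^sup>2 - a 0)
      = vfree phi psi x t + (1/2) * (\<integral>(y, s)\<in>tri x t. F (u y s) \<partial>lborel)"
    using p0_pos pb[of 0] t2 by (simp add: c_def field_simps)
  also have "\<dots> = u x t"
    using mild t_pos t_lt by (simp add: mild_solution_def)
  finally show ?thesis
    using G_eq by (simp add: G_def[abs_def])
qed

end
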